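(* Let $T=(V,E)$ be a tree with $\mathrm{pthin}(T)=2$, and let $\sigma$ be an ordering of $V$ and $S=\{V^0,V^1\}$ a partition of $V$ that are strongly consistent. Let $v_1,v_2,v_3$ be vertices with $v_1<v_2<v_3$ and $\deg(v_2)=3$. If a vertex $v_0$ is the nexus between $v_1,v_2,v_3$, then $v_0$ is adjacent to $v_2$.
   Context: For a graph $G=(V,E)$, a linear ordering $<$ of $V$ and a partition of $V$ into classes are called strongly consistent if for every triple $r<s<t$ of vertices with $rt\in E$: if $r$ and $s$ belong to the same class then $st\in E$, and if $s$ and $t$ belong to the same class then $rs\in E$. The proper thinness $\mathrm{pthin}(G)$ is the minimum $k$ such that some ordering and some partition into $k$ classes are strongly consistent. For distinct vertices $v_0,v_1,v_2,v_3$ of a tree $T$, let $C_i$ be the unique simple path from $v_0$ to $v_i$ ($i=1,2,3$) and $C_i'$ its vertex set minus $v_0$; $v_0$ is the nexus between $v_1,v_2,v_3$ if $C_1',C_2',C_3'$ are pairwise disjoint. *)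

theory Defs
  imports Main
begin

definition graph :: "'a set \<Rightarrow> ('a \<times> 'a) set \<Rightarrow> bool" where
  "graph V E \<longleftrightarrow> E \<subseteq> V \<times> V \<and> (\<forall>u v. (u,v) \<in> E \<longrightarrow> (v,u) \<in> E) \<and> (\<forall>v. (v,v) \<notin> E)"

definition is_path :: "'a set \<Rightarrow> ('a \<times> 'a) set \<Rightarrow> 'a list \<Rightarrow> bool" where
  "is_path V E p \<longleftrightarrow> p \<noteq> [] \<and> distinct p \<and> set p \<subseteq> V \<and>
     (\<forall>i. Suc i < length p \<longrightarrow> (p ! i, p ! Suc i) \<in> E)"

definition is_cycle :: "'a set \<Rightarrow> ('a \<times> 'a) set \<Rightarrow> 'a list \<Rightarrow> bool" where
  "is_cycle V E c \<longleftrightarrow> length c \<ge> 3 \<and> is_path V E c \<and> (last c, hd c) \<in> E"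

definition is_tree :: "'a set \<Rightarrow> ('a \<times> 'a) set \<Rightarrow> bool" where
  "is_tree V E \<longleftrightarrow> graph V E \<and> finite V \<and> V \<noteq> {} \<and>
     (\<forall>u\<in>V. \<forall>v\<in>V. \<exists>p. is_path V E p \<and> hd p = u \<and> last p = v) \<and>
     (\<nexists>c. is_cycle V E c)"

definition degree :: "('a \<times> 'a) set \<Rightarrow> 'a \<Rightarrow> nat" where
  "degree E v = card {u. (v,u) \<in> E}"

text \<open>An ordering of V is given by an injective map \<sigma> into nat (r < s iff \<sigma> r < \<sigma> s);
  a partition into k classes by a class map c with values in {..<k}.\<close>
definition strongly_consistent ::
  "'a set \<Rightarrow> ('a \<times> 'a) set \<Rightarrow> ('a \<Rightarrow> nat) \<Rightarrow> ('a \<Rightarrow> nat) \<Rightarrow> bool" where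
  "strongly_consistent V E \<sigma> c \<longleftrightarrow>
     (\<forall>r\<in>V. \<forall>s\<in>V. \<forall>t\<in>V. \<sigma> r < \<sigma> s \<and> \<sigma> s < \<sigma> t \<and> (r,t) \<in> E \<longrightarrow>
        (c r = c s \<longrightarrow> (s,t) \<in> E) \<and> (c s = c t \<longrightarrow> (r,s) \<in> E))"

definition pthin :: "'a set \<Rightarrow> ('a \<times> 'a) set \<Rightarrow> nat" where
  "pthin V E = (LEAST k. \<exists>\<sigma> c. inj_on \<sigma> V \<and> c ` V \<subseteq> {..<k} \<and> strongly_consistent V E \<sigma> c)"

definition tree_path_set :: "'a set \<Rightarrow> ('a \<times> 'a) set \<Rightarrow> 'a \<Rightarrow> 'a \<Rightarrow> 'a set" where
  "tree_path_set V E u v = set (THE p. is_path V E p \<and> hd p = u \<and> last p = v)"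

definition nexus :: "'a set \<Rightarrow> ('a \<times> 'a) set \<Rightarrow> 'a \<Rightarrow> 'a \<Rightarrow> 'a \<Rightarrow> 'a \<Rightarrow> bool" where
  "nexus V E v0 v1 v2 v3 \<longleftrightarrow>
     {v0,v1,v2,v3} \<subseteq> V \<and> distinct [v0,v1,v2,v3] \<and>
     (let C1 = tree_path_set V E v0 v1 - {v0};
          C2 = tree_path_set V E v0 v2 - {v0};
          C3 = tree_path_set V E v0 v3 - {v0}
      in C1 \<inter> C2 = {} \<and> C1 \<inter> C3 = {} \<and> C2 \<inter> C3 = {})"

end

theory Submission imports Defs begin

text \<open>Suppose v0 is not adjacent to v2. Since v0 is the nexus, the tree paths from v0 to v1 and
  to v3 meet the path to v2 only in v0, so (by uniqueness of tree paths) they avoid v2 and all its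
  neighbours. As v1 < v2 < v3, one of them has its ends on different sides of v2 in the ordering,
  hence contains an edge rt with r < v2 < t and neither r nor t adjacent to v2. Strong consistency
  forces r and t into the class not containing v2, and then every neighbour of v2 into the class of
  v2. Two neighbours on the same side of v2 would then be adjacent, giving a triangle; so v2 has at
  most one neighbour on each side, contradicting degree 3.\<close>

lemma graph_edge_sym: "graph V E \<Longrightarrow> (u, v) \<in> E \<Longrightarrow> (v, u) \<in> E"
  by (simp add: graph_def)

lemma graph_edge_in_V: "graph V E \<Longrightarrow> (u, v) \<in> E \<Longrightarrow> u \<in> V \<and> v \<in> V"
  by (auto simp: graph_def)

lemma graph_no_loop: "graph V E \<Longrightarrow> (u, u) \<notin> E"
  by (simp add: graph_def)

lemma is_path_singleton [simp]: "is_path V E [x] \<longleftrightarrow> x \<in> V"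
  by (simp add: is_path_def)

lemma is_path_Cons_Cons:
  "is_path V E (x # y # xs) \<longleftrightarrow> x \<in> V \<and> (x, y) \<in> E \<and> x \<notin> set (y # xs) \<and> is_path V E (y # xs)"
proof
  assume p: "is_path V E (x # y # xs)"
  then have edges: "Suc i < length (x # y # xs) \<Longrightarrow> ((x # y # xs) ! i, (x # y # xs) ! Suc i) \<in> E" for i
    by (simp add: is_path_def)
  have "Suc i < length (y # xs) \<Longrightarrow> ((y # xs) ! i, (y # xs) ! Suc i) \<in> E" for i
    using edges[of "Suc i"] by simp
  with p edges[of 0] show "x \<in> V \<and> (x, y) \<in> E \<and> x \<notin> set (y # xs) \<and> is_path V E (y # xs)"
    by (auto simp: is_path_def)
next
  assume "x \<in> V \<and> (x, y) \<in> E \<and> x \<notin> set (y # xs) \<and> is_path V E (y # xs)"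
  then show "is_path V E (x # y # xs)"
    unfolding is_path_def by (auto simp: less_Suc_eq_0_disj)
qed

lemma is_path_append:
  assumes "xs \<noteq> []" "ys \<noteq> []"
  shows "is_path V E (xs @ ys) \<longleftrightarrow>
    is_path V E xs \<and> is_path V E ys \<and> set xs \<inter> set ys = {} \<and> (last xs, hd ys) \<in> E"
  using assms
proof (induction xs)
  case (Cons x xs)
  then show ?case
    by (cases xs; cases ys) (auto simp: is_path_Cons_Cons)
qed simp

lemma is_path_prefix: "is_path V E (xs @ ys) \<Longrightarrow> xs \<noteq> [] \<Longrightarrow> is_path V E xs"
  using is_path_append by (cases "ys = []") auto

lemma is_path_rev:
  assumes "graph V E"
  shows "is_path V E xs \<Longrightarrow> is_path V E (rev xs)"
proof (induction xs rule: induct_list012)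
  case (3 x y ys)
  then show ?case
    using is_path_append[of "rev (y # ys)" "[x]" V E] graph_edge_sym[OF assms]
    by (auto simp: is_path_Cons_Cons last_rev)
qed (simp_all add: is_path_def)

lemma is_cycle_append:
  assumes "is_path V E P" "is_path V E Q" "set P \<inter> set Q = {}"
    and "(last P, hd Q) \<in> E" "(last Q, hd P) \<in> E" "length P + length Q \<ge> 3"
  shows "is_cycle V E (P @ Q)"
proof -
  have "P \<noteq> []" "Q \<noteq> []"
    using assms(1,2) by (simp_all add: is_path_def)
  with assms show ?thesis
    by (simp add: is_cycle_def is_path_append)
qed

lemma acyclic_no_triangle:
  assumes "graph V E" "\<nexists>C. is_cycle V E C" "(a, b) \<in> E" "(b, d) \<in> E" "(d, a) \<in> E"
  shows False
proof -
  have "a \<noteq> b" "b \<noteq> d" "a \<noteq> d" "a \<in> V" "b \<in> V" "d \<in> V"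
    using assms graph_no_loop graph_edge_in_V by metis+
  with assms(3-5) have "is_cycle V E [a, b, d]"
    by (simp add: is_cycle_def is_path_Cons_Cons)
  with assms(2) show False by blast
qed

text \<open>If two paths leave x through different neighbours, the first vertex w of one that lies on
  the other closes a cycle.\<close>

lemma acyclic_path_second_vertex_unique:
  assumes G: "graph V E" and acyclic: "\<nexists>C. is_cycle V E C"
    and p: "is_path V E (x # y # ys)" and q: "is_path V E (x # z # zs)"
    and last_eq: "last (y # ys) = last (z # zs)"
  shows "y = z"
proof (rule ccontr)
  assume "y \<noteq> z"
  let ?ps = "y # ys" and ?qs = "z # zs"
  have q1: "(x, z) \<in> E" "x \<notin> set ?qs" "is_path V E ?qs"
    using q is_path_Cons_Cons by metis+
  have "\<exists>w\<in>set ?ps. w \<in> set ?qs"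
    using last_eq by (metis last_in_set list.distinct(1))
  then obtain A w B where ps: "?ps = A @ w # B" and "w \<in> set ?qs" and A: "\<forall>a\<in>set A. a \<notin> set ?qs"
    using split_list_first_prop[of ?ps "\<lambda>w. w \<in> set ?qs"] by blast
  then obtain C D where qs: "?qs = C @ w # D"
    using split_list by metis
  have P: "is_path V E (x # A @ [w])"
    using p ps is_path_prefix[of V E "x # A @ [w]" B] by simp
  have "is_cycle V E (x # A @ [w])" if "C = []"
  proof -
    have "w = z" "A \<noteq> []"
      using that qs \<open>y \<noteq> z\<close> ps by (auto simp: Cons_eq_append_conv)
    with P q1(1) graph_edge_sym[OF G] show ?thesis
      by (auto simp: is_cycle_def Suc_le_eq)
  qed
  moreover have "is_cycle V E ((x # A @ [w]) @ rev C)" if "C \<noteq> []"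
  proof (rule is_cycle_append[OF P])
    show "is_path V E (rev C)"
      using is_path_rev[OF G] is_path_prefix q1(3) qs that by metis
    show "set (x # A @ [w]) \<inter> set (rev C) = {}"
      using q1(2,3) A qs by (auto simp: is_path_def)
    show "(last (x # A @ [w]), hd (rev C)) \<in> E"
      using q1(3) qs is_path_append[of C "w # D"] that graph_edge_sym[OF G] by (simp add: hd_rev)
    show "(last (rev C), hd (x # A @ [w])) \<in> E"
      using q1(1) qs that graph_edge_sym[OF G] by (cases C) (auto simp: last_rev)
  qed (use that in \<open>simp add: Suc_le_eq\<close>)
  ultimately show False
    using acyclic by blast
qed

lemma acyclic_path_unique:
  assumes G: "graph V E" and acyclic: "\<nexists>C. is_cycle V E C"
  shows "is_path V E p \<Longrightarrow> is_path V E q \<Longrightarrow> hd p = hd q \<Longrightarrow> last p = last q \<Longrightarrow> p = q"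
proof (induction p arbitrary: q)
  case Nil
  then show ?case by (simp add: is_path_def)
next
  case (Cons x ps)
  obtain q' where q: "q = x # q'"
    using Cons.prems(2,3) by (cases q) (auto simp: is_path_def)
  show ?case
  proof (cases ps)
    case Nil
    have "x \<notin> set q'"
      using Cons.prems(2) q by (simp add: is_path_def)
    moreover have "last q = x"
      using Cons.prems(4) Nil by simp
    ultimately show ?thesis
      using q Nil by (metis last.simps last_in_set)
  next
    case (Cons y ys)
    have "last ps \<noteq> x"
      using Cons.prems(1) \<open>ps = y # ys\<close> by (metis is_path_Cons_Cons last_in_set list.distinct(1))
    then obtain z zs where q': "q' = z # zs"
      using Cons.prems(4) q \<open>ps = y # ys\<close> by (cases q') auto
    have last_eq: "last ps = last q'"
      using Cons.prems(4) q \<open>ps = y # ys\<close> q' by simp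
    with Cons.prems(1,2) have "y = z"
      using acyclic_path_second_vertex_unique[OF G acyclic] q q' \<open>ps = y # ys\<close> by metis
    moreover have "is_path V E ps" "is_path V E q'"
      using Cons.prems(1,2) q q' \<open>ps = y # ys\<close> is_path_Cons_Cons by metis+
    ultimately have "ps = q'"
      using Cons.IH[of q'] last_eq q' \<open>ps = y # ys\<close> by simp
    with q show ?thesis
      by simp
  qed
qed

lemma tree_path_exists:
  "is_tree V E \<Longrightarrow> u \<in> V \<Longrightarrow> v \<in> V \<Longrightarrow> \<exists>p. is_path V E p \<and> hd p = u \<and> last p = v"
  by (simp add: is_tree_def)

lemma tree_path_set_eq:
  assumes "is_tree V E" "is_path V E p"
  shows "tree_path_set V E (hd p) (last p) = set p"
proof -
  have "(THE q. is_path V E q \<and> hd q = hd p \<and> last q = last p) = p"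
    using assms acyclic_path_unique[of V E] by (intro the_equality) (auto simp: is_tree_def)
  then show ?thesis
    by (simp add: tree_path_set_def)
qed

text \<open>An edge vw with w on p would extend the initial segment of p up to w to a second path
  from v0 to v, which by uniqueness is q.\<close>

lemma branch_avoids_neighbourhood:
  assumes G: "graph V E" and acyclic: "\<nexists>C. is_cycle V E C"
    and p: "is_path V E p" "hd p = v0"
    and q: "is_path V E q" "hd q = v0" "last q = v" "v \<noteq> v0" "(v0, v) \<notin> E"
    and disjoint: "(set p - {v0}) \<inter> (set q - {v0}) = {}"
    and w: "w \<in> set p"
  shows "w \<noteq> v \<and> (v, w) \<notin> E"
proof
  have "v \<in> set q"
    using q by (metis is_path_def last_in_set)
  with disjoint q(4) have v_notin: "v \<notin> set p"
    by blast
  with w show "w \<noteq> v" by blast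
  show "(v, w) \<notin> E"
  proof
    assume vw: "(v, w) \<in> E"
    with q(5) graph_edge_sym[OF G] have "w \<noteq> v0" by blast
    obtain A B where pA: "p = A @ w # B"
      using w split_list by metis
    with p(2) \<open>w \<noteq> v0\<close> have "A \<noteq> []" by auto
    have "is_path V E (A @ [w])"
      using p(1) pA is_path_prefix[of V E "A @ [w]" B] by simp
    moreover have "v \<in> V" "set (A @ [w]) \<inter> {v} = {}"
      using graph_edge_in_V[OF G vw] v_notin pA by auto
    ultimately have "is_path V E (A @ [w] @ [v])"
      using is_path_append[of "A @ [w]" "[v]"] vw graph_edge_sym[OF G] by simp
    moreover have "hd (A @ [w] @ [v]) = v0"
      using p(2) pA \<open>A \<noteq> []\<close> by simp
    ultimately have "A @ [w] @ [v] = q"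
      using acyclic_path_unique[OF G acyclic _ q(1)] q(2,3) by simp
    with disjoint w \<open>w \<noteq> v0\<close> show False
      by auto
  qed
qed

lemma nexus_branch_avoids_neighbourhood:
  assumes T: "is_tree V E" and nexus: "nexus V E v0 v1 v2 v3" and non_adjacent: "(v0, v2) \<notin> E"
    and u: "u \<in> {v1, v3}"
  obtains p where "is_path V E p" "hd p = v0" "last p = u"
    "\<And>w. w \<in> set p \<Longrightarrow> w \<noteq> v2 \<and> (v2, w) \<notin> E"
proof -
  have G: "graph V E" and acyclic: "\<nexists>C. is_cycle V E C"
    using T by (auto simp: is_tree_def)
  have V: "v0 \<in> V" "u \<in> V" "v2 \<in> V" and distinct: "distinct [v0, v1, v2, v3]"
    using nexus u by (auto simp: nexus_def)
  obtain p q where p: "is_path V E p" "hd p = v0" "last p = u"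
    and q: "is_path V E q" "hd q = v0" "last q = v2"
    using tree_path_exists[OF T] V by metis
  then have "tree_path_set V E v0 u = set p" "tree_path_set V E v0 v2 = set q"
    using tree_path_set_eq[OF T] by metis+
  with nexus u have "(set p - {v0}) \<inter> (set q - {v0}) = {}"
    by (auto simp: nexus_def Let_def)
  with p q distinct show ?thesis
    using that branch_avoids_neighbourhood[OF G acyclic p(1,2) q _ non_adjacent] by auto
qed

lemma list_adjacent_change:
  "xs \<noteq> [] \<Longrightarrow> P (hd xs) \<noteq> P (last xs) \<Longrightarrow> \<exists>i. Suc i < length xs \<and> P (xs ! i) \<noteq> P (xs ! Suc i)"
proof (induction xs)
  case (Cons x xs)
  show ?case
  proof (cases "xs = [] \<or> P x \<noteq> P (hd xs)")
    case True
    with Cons.prems show ?thesis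
      by (intro exI[of _ 0]) (cases xs; auto)
  next
    case False
    with Cons.prems have "P (hd xs) \<noteq> P (last xs)"
      by auto
    with Cons.IH False obtain i where "Suc i < length xs" "P (xs ! i) \<noteq> P (xs ! Suc i)"
      by blast
    then show ?thesis
      by (intro exI[of _ "Suc i"]) simp
  qed
qed simp

lemma path_crossing_edge:
  fixes \<sigma> :: "'a \<Rightarrow> nat"
  assumes G: "graph V E" and p: "is_path V E p" and inj: "inj_on \<sigma> V"
    and s: "s \<in> V" "s \<notin> set p" and sides: "(\<sigma> (hd p) < \<sigma> s) \<noteq> (\<sigma> (last p) < \<sigma> s)"
  shows "\<exists>r t. r \<in> set p \<and> t \<in> set p \<and> (r, t) \<in> E \<and> \<sigma> r < \<sigma> s \<and> \<sigma> s < \<sigma> t"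
proof -
  obtain i where i: "Suc i < length p" "(\<sigma> (p ! i) < \<sigma> s) \<noteq> (\<sigma> (p ! Suc i) < \<sigma> s)"
    using list_adjacent_change[OF _ sides] p by (auto simp: is_path_def)
  let ?a = "p ! i" and ?b = "p ! Suc i"
  have in_p: "?a \<in> set p" "?b \<in> set p" and edge: "(?a, ?b) \<in> E"
    using i(1) p by (auto simp: is_path_def)
  moreover have "\<sigma> ?a \<noteq> \<sigma> s" "\<sigma> ?b \<noteq> \<sigma> s"
    using in_p p s inj by (metis inj_on_contraD is_path_def subsetD)+
  ultimately show ?thesis
    using i(2) graph_edge_sym[OF G edge] by (metis linorder_neqE_nat)
qed

locale two_class_consistent =
  fixes V :: "'a set" and E :: "('a \<times> 'a) set" and \<sigma> c :: "'a \<Rightarrow> nat"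
  assumes graph: "graph V E"
    and triangle_free: "\<And>a b d. (a, b) \<in> E \<Longrightarrow> (b, d) \<in> E \<Longrightarrow> (d, a) \<in> E \<Longrightarrow> False"
    and inj: "inj_on \<sigma> V"
    and two_classes: "c ` V \<subseteq> {0, 1}"
    and consistent: "strongly_consistent V E \<sigma> c"
begin

lemma consistentD:
  assumes "r \<in> V" "s \<in> V" "t \<in> V" "\<sigma> r < \<sigma> s" "\<sigma> s < \<sigma> t" "(r, t) \<in> E"
  shows "c r = c s \<Longrightarrow> (s, t) \<in> E" and "c s = c t \<Longrightarrow> (r, s) \<in> E"
  using consistent assms unfolding strongly_consistent_def by blast+

lemma class_eq_if_both_differ:
  assumes "x \<in> V" "y \<in> V" "z \<in> V" "c x \<noteq> c y" "c x \<noteq> c z"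
  shows "c y = c z"
proof -
  have "c x \<in> {0, 1}" "c y \<in> {0, 1}" "c z \<in> {0, 1}"
    using assms(1-3) two_classes by auto
  with assms(4,5) show ?thesis
    by auto
qed

lemma edge_sym: "(u, v) \<in> E \<Longrightarrow> (v, u) \<in> E"
  using graph_edge_sym[OF graph] .

lemma edge_in_V: "(u, v) \<in> E \<Longrightarrow> u \<in> V \<and> v \<in> V"
  using graph_edge_in_V[OF graph] .

lemma neighbour_order_ne: "(s, y) \<in> E \<Longrightarrow> \<sigma> y \<noteq> \<sigma> s"
  using inj edge_in_V graph_no_loop[OF graph] by (metis inj_on_contraD)

context
  fixes s r t
  assumes s: "s \<in> V"
    and crossing: "(r, t) \<in> E" "\<sigma> r < \<sigma> s" "\<sigma> s < \<sigma> t"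
    and non_adjacent: "(s, r) \<notin> E" "(s, t) \<notin> E"
begin

text \<open>r and t lie in the class other than that of s; a neighbour y of s in the class of r
  would, wherever it sits relative to r and t, be adjacent to r or t or form a triangle with them.\<close>

lemma crossed_neighbour_class:
  assumes y: "(s, y) \<in> E"
  shows "c y = c s"
proof -
  have rV: "r \<in> V" and tV: "t \<in> V" and yV: "y \<in> V"
    using edge_in_V crossing(1) y by auto
  have "c r \<noteq> c s" "c t \<noteq> c s"
    using consistentD[OF rV s tV crossing(2,3,1)] non_adjacent edge_sym by metis+
  then have crt: "c r = c t"
    using class_eq_if_both_differ[OF s rV tV] by metis
  have "y \<noteq> r" "y \<noteq> t"
    using y non_adjacent by auto
  then have "\<sigma> y \<noteq> \<sigma> r" "\<sigma> y \<noteq> \<sigma> t"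
    using inj yV rV tV by (meson inj_on_contraD)+
  then consider "\<sigma> y < \<sigma> r" | "\<sigma> r < \<sigma> y" "\<sigma> y < \<sigma> t" | "\<sigma> t < \<sigma> y"
    by linarith
  then have "c y \<noteq> c r"
  proof cases
    case 1
    then show ?thesis
      using consistentD(1)[OF yV rV s _ crossing(2)] y edge_sym non_adjacent(1) by metis
  next
    case 2
    show ?thesis
    proof
      assume "c y = c r"
      then have "(y, t) \<in> E" "(r, y) \<in> E"
        using consistentD[OF rV yV tV 2 crossing(1)] crt by auto
      with crossing(1) show False
        using triangle_free edge_sym by blast
    qed
  next
    case 3
    then show ?thesis
      using consistentD(2)[OF s tV yV crossing(3) _ y] non_adjacent(2) crt by metis
  qed
  with \<open>c r \<noteq> c s\<close> show ?thesis
    using class_eq_if_both_differ[OF rV yV s] by metis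
qed

lemma crossed_same_side_adjacent:
  assumes a: "(s, a) \<in> E" and b: "(s, b) \<in> E"
    and "\<sigma> a < \<sigma> b" "(\<sigma> s < \<sigma> a) = (\<sigma> s < \<sigma> b)"
  shows "(a, b) \<in> E"
proof -
  have aV: "a \<in> V" and bV: "b \<in> V"
    using a b edge_in_V by auto
  show ?thesis
  proof (cases "\<sigma> s < \<sigma> a")
    case True
    then show ?thesis
      using consistentD(1)[OF s aV bV True assms(3) b] crossed_neighbour_class[OF a] by simp
  next
    case False
    with assms(4) neighbour_order_ne[OF a] neighbour_order_ne[OF b]
    have "\<sigma> b < \<sigma> s"
      by linarith
    then show ?thesis
      using consistentD(2)[OF aV bV s assms(3) _ edge_sym[OF a]] crossed_neighbour_class[OF b] by simp
  qed
qed

lemma crossed_one_neighbour_each_side: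
  assumes "(s, y1) \<in> E" "(s, y2) \<in> E" "(\<sigma> s < \<sigma> y1) = (\<sigma> s < \<sigma> y2)"
  shows "y1 = y2"
proof (rule ccontr)
  assume "y1 \<noteq> y2"
  with assms(1,2) have "\<sigma> y1 \<noteq> \<sigma> y2"
    using inj edge_in_V by (meson inj_on_contraD)
  then consider "\<sigma> y1 < \<sigma> y2" | "\<sigma> y2 < \<sigma> y1"
    by linarith
  then have "(y1, y2) \<in> E"
    by cases (use crossed_same_side_adjacent assms edge_sym in metis)+
  with assms(1,2) show False
    using triangle_free edge_sym by blast
qed

lemma crossed_degree_le_2: "degree E s \<le> 2"
proof -
  let ?above = "{y. (s, y) \<in> E \<and> \<sigma> s < \<sigma> y}" and ?below = "{y. (s, y) \<in> E \<and> \<not> \<sigma> s < \<sigma> y}"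
  have "card ?above \<le> 1" "card ?below \<le> 1"
    using crossed_one_neighbour_each_side
    by (cases "finite ?above"; cases "finite ?below"; simp add: card_le_Suc0_iff_eq)+
  then have "card (?above \<union> ?below) \<le> 2"
    using card_Un_le[of ?above ?below] by linarith
  moreover have "?above \<union> ?below = {y. (s, y) \<in> E}"
    by blast
  ultimately show ?thesis
    by (simp add: degree_def)
qed

end

end

theorem corollaryA11:
  fixes V :: "'a set" and E :: "('a \<times> 'a) set" and \<sigma> c :: "'a \<Rightarrow> nat"
    and v0 v1 v2 v3 :: 'a
  assumes "is_tree V E"
    and "pthin V E = 2"
    and "inj_on \<sigma> V"
    and "c ` V = {0, 1}"
    and "strongly_consistent V E \<sigma> c"
    and "v1 \<in> V" "v2 \<in> V" "v3 \<in> V"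
    and "\<sigma> v1 < \<sigma> v2" "\<sigma> v2 < \<sigma> v3"
    and "degree E v2 = 3"
    and "nexus V E v0 v1 v2 v3"
  shows "(v0, v2) \<in> E"
proof (rule ccontr)
  assume non_adjacent: "(v0, v2) \<notin> E"
  have G: "graph V E" and acyclic: "\<nexists>C. is_cycle V E C"
    using assms(1) by (auto simp: is_tree_def)
  obtain p1 where p1: "is_path V E p1" "hd p1 = v0" "last p1 = v1"
    and avoids1: "\<And>w. w \<in> set p1 \<Longrightarrow> w \<noteq> v2 \<and> (v2, w) \<notin> E"
    using nexus_branch_avoids_neighbourhood[OF assms(1,12) non_adjacent] by blast
  obtain p3 where p3: "is_path V E p3" "hd p3 = v0" "last p3 = v3"
    and avoids3: "\<And>w. w \<in> set p3 \<Longrightarrow> w \<noteq> v2 \<and> (v2, w) \<notin> E"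
    using nexus_branch_avoids_neighbourhood[OF assms(1,12) non_adjacent] by blast
  obtain p where p: "is_path V E p" "(\<sigma> (hd p) < \<sigma> v2) \<noteq> (\<sigma> (last p) < \<sigma> v2)"
    and avoids: "\<And>w. w \<in> set p \<Longrightarrow> w \<noteq> v2 \<and> (v2, w) \<notin> E"
  proof (cases "\<sigma> v0 < \<sigma> v2")
    case True
    then show ?thesis
      using that[of p3] p3 avoids3 assms(10) by auto
  next
    case False
    then show ?thesis
      using that[of p1] p1 avoids1 assms(9) by auto
  qed
  then obtain r t where rt: "r \<in> set p" "t \<in> set p" "(r, t) \<in> E" "\<sigma> r < \<sigma> v2" "\<sigma> v2 < \<sigma> t"
    using path_crossing_edge[OF G p(1) assms(3,7) _ p(2)] avoids by blast
  interpret two_class_consistent V E \<sigma> c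
  proof
    show "c ` V \<subseteq> {0, 1}"
      using assms(4) by simp
  qed (fact G assms(3) assms(5) acyclic_no_triangle[OF G acyclic])+
  have "degree E v2 \<le> 2"
    using crossed_degree_le_2[OF assms(7) rt(3-5)] avoids rt(1,2) by blast
  with assms(11) show False
    by simp
qed

end
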